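(* In the setting of the context, let $\alpha,\beta\in R$ be distinct roots with $\pi(\alpha)=\pi(\beta)$. Then $\pi_k[\mathfrak g_\alpha,\mathfrak g_{-\beta}]\subseteq C_{\mathfrak g}(\mathfrak h^\sigma)$ for each $k\in\mathbb Z$. Moreover, $\pi[\mathfrak g_\alpha,\mathfrak g_{-\beta}]=0$.
   Context: All Lie algebras are over $\mathbb C$. An extended affine Lie algebra (EALA) is a triple $(\mathfrak g,(\cdot,\cdot),\mathfrak h)$ where $\mathfrak g$ is a Lie algebra, $\mathfrak h$ a subalgebra and $(\cdot,\cdot)$ a bilinear form such that: the form is symmetric, non-degenerate, invariant; $\mathfrak h$ is finite-dimensional and $\mathfrak g=\bigoplus_{\alpha\in\mathfrak h^*}\mathfrak g_\alpha$, $\mathfrak g_\alpha=\{x:[h,x]=\alpha(h)x\ \forall h\in\mathfrak h\}$, $\mathfrak g_0=\mathfrak h$; with root system $R=\{\alpha:\mathfrak g_\alpha\ne0\}$ ($\mathfrak g_\gamma=0$ for $\gamma\notin R$), $t_\alpha\in\mathfrak h$ given by $\alpha(h)=(h,t_\alpha)$, $(\alpha,\beta)=(t_\alpha,t_\beta)$, $R^\times=\{\alpha\in R:(\alpha,\alpha)\ne0\}$, $R^0=R\setminus R^\times$: $\mathrm{ad}\,x$ locally nilpotent for $x\in\mathfrak g_\alpha$, $\alpha\in R^\times$; $R$ discrete; $R^\times$ connected and isotropic roots non-isolated. Root systems assumed reduced. Setting: $(\mathfrak g,(\cdot,\cdot),\mathfrak h)$ is an EALA with root system $R$; $\sigma$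 is an automorphism of $\mathfrak g$ with $\sigma^m=\mathrm{id}$ ($m\ge1$), $\sigma(\mathfrak h)=\mathfrak h$, $(\sigma x,\sigma y)=(x,y)$ for all $x,y$, and $C_{\mathfrak g^\sigma}(\mathfrak h^\sigma)=\mathfrak h^\sigma$, where $\mathfrak g^\sigma,\mathfrak h^\sigma$ are the fixed points and $C$ denotes centralizer. $\sigma$ acts on $\mathfrak h^*$ by $\sigma(\alpha)(h)=\alpha(\sigma^{-1}h)$. Let $\omega$ be a primitive $m$-th root of unity and $\pi_j=\frac1m\sum_{i=0}^{m-1}\omega^{-ij}\sigma^i$ (indices mod $m$), acting on $\mathfrak g$ and on $\mathfrak h^*$; $\pi=\pi_0$. *)

theory Defs
  imports Complex_Main
begin

text \<open>Linear functionals on the subalgebra h (elements of h-dual) are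
modelled as functions 'g => complex that are linear on h and vanish outside h.\<close>

definition lie_algebra :: "(complex \<Rightarrow> 'g::ab_group_add \<Rightarrow> 'g) \<Rightarrow> ('g \<Rightarrow> 'g \<Rightarrow> 'g) \<Rightarrow> bool" where
  "lie_algebra sc br \<longleftrightarrow> vector_space sc
     \<and> (\<forall>x y z. br (x + y) z = br x z + br y z)
     \<and> (\<forall>c x y. br (sc c x) y = sc c (br x y))
     \<and> (\<forall>x. br x x = 0)
     \<and> (\<forall>x y z. br x (br y z) + br y (br z x) + br z (br x y) = 0)"

definition lspan :: "(complex \<Rightarrow> 'g::ab_group_add \<Rightarrow> 'g) \<Rightarrow> 'g set \<Rightarrow> 'g set" where
  "lspan sc S = module.span sc S"

definition brsp :: "(complex \<Rightarrow> 'g::ab_group_add \<Rightarrow> 'g) \<Rightarrow> ('g \<Rightarrow> 'g \<Rightarrow> 'g) \<Rightarrow> 'g set \<Rightarrow> 'g set \<Rightarrow> 'g set" where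
  "brsp sc br X Y = lspan sc {br x y | x y. x \<in> X \<and> y \<in> Y}"

definition centralizer :: "('g \<Rightarrow> 'g \<Rightarrow> 'g::ab_group_add) \<Rightarrow> 'g set \<Rightarrow> 'g set \<Rightarrow> 'g set" where
  "centralizer br A S = {x \<in> A. \<forall>s\<in>S. br s x = 0}"

definition hdual :: "(complex \<Rightarrow> 'g::ab_group_add \<Rightarrow> 'g) \<Rightarrow> 'g set \<Rightarrow> ('g \<Rightarrow> complex) set" where
  "hdual sc h = {\<alpha>. (\<forall>x\<in>h. \<forall>y\<in>h. \<alpha> (x + y) = \<alpha> x + \<alpha> y)
                   \<and> (\<forall>c. \<forall>x\<in>h. \<alpha> (sc c x) = c * \<alpha> x)
                   \<and> (\<forall>x. x \<notin> h \<longrightarrow> \<alpha> x = 0)}"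

definition root_space :: "(complex \<Rightarrow> 'g::ab_group_add \<Rightarrow> 'g) \<Rightarrow> ('g \<Rightarrow> 'g \<Rightarrow> 'g) \<Rightarrow> 'g set \<Rightarrow> ('g \<Rightarrow> complex) \<Rightarrow> 'g set" where
  "root_space sc br h \<alpha> = {x. \<forall>t\<in>h. br t x = sc (\<alpha> t) x}"

definition roots :: "(complex \<Rightarrow> 'g::ab_group_add \<Rightarrow> 'g) \<Rightarrow> ('g \<Rightarrow> 'g \<Rightarrow> 'g) \<Rightarrow> 'g set \<Rightarrow> ('g \<Rightarrow> complex) set" where
  "roots sc br h = {\<alpha> \<in> hdual sc h. root_space sc br h \<alpha> \<noteq> {0}}"

definition tvec :: "('g \<Rightarrow> 'g \<Rightarrow> complex) \<Rightarrow> 'g set \<Rightarrow> ('g \<Rightarrow> complex) \<Rightarrow> 'g" where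
  "tvec B h \<alpha> = (THE t. t \<in> h \<and> (\<forall>s\<in>h. \<alpha> s = B s t))"

definition rform :: "('g \<Rightarrow> 'g \<Rightarrow> complex) \<Rightarrow> 'g set \<Rightarrow> ('g \<Rightarrow> complex) \<Rightarrow> ('g \<Rightarrow> complex) \<Rightarrow> complex" where
  "rform B h \<alpha> \<beta> = B (tvec B h \<alpha>) (tvec B h \<beta>)"

definition nonisotropic_roots where
  "nonisotropic_roots sc br B h = {\<alpha> \<in> roots sc br h. rform B h \<alpha> \<alpha> \<noteq> 0}"

definition isotropic_roots where
  "isotropic_roots sc br B h = roots sc br h - nonisotropic_roots sc br B h"

text \<open>Discreteness of R is expressed in the (pointwise) topology of h^*, which coincides
  with the usual topology since h is finite-dimensional.\<close>
definition eala :: "(complex \<Rightarrow> 'g::ab_group_add \<Rightarrow> 'g) \<Rightarrow> ('g \<Rightarrow> 'g \<Rightarrow> 'g) \<Rightarrow> ('g \<Rightarrow> 'g \<Rightarrow> complex) \<Rightarrow> 'g set \<Rightarrow> bool" where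
  "eala sc br B h \<longleftrightarrow>
     lie_algebra sc br
     \<comment> \<open>h is a finite-dimensional subalgebra\<close>
     \<and> module.subspace sc h \<and> (\<forall>x\<in>h. \<forall>y\<in>h. br x y \<in> h)
     \<and> (\<exists>F. finite F \<and> F \<subseteq> h \<and> lspan sc F = h)
     \<comment> \<open>the form is bilinear, symmetric, non-degenerate, invariant\<close>
     \<and> (\<forall>x y z. B (x + y) z = B x z + B y z)
     \<and> (\<forall>c x y. B (sc c x) y = c * B x y)
     \<and> (\<forall>x y. B x y = B y x)
     \<and> (\<forall>x. (\<forall>y. B x y = 0) \<longrightarrow> x = 0)
     \<and> (\<forall>x y z. B (br x y) z = B x (br y z))
     \<comment> \<open>g = direct sum of the root spaces g_alpha, alpha in h^*\<close>
     \<and> (\<forall>x. x \<in> lspan sc (\<Union>\<alpha>\<in>hdual sc h. root_space sc br h \<alpha>))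
     \<and> (\<forall>S f. finite S \<and> S \<subseteq> hdual sc h \<and> (\<forall>\<alpha>\<in>S. f \<alpha> \<in> root_space sc br h \<alpha>)
              \<and> sum f S = 0 \<longrightarrow> (\<forall>\<alpha>\<in>S. f \<alpha> = 0))
     \<comment> \<open>g_0 = h\<close>
     \<and> root_space sc br h (\<lambda>_. 0) = h
     \<comment> \<open>ad x locally nilpotent for x in g_alpha, alpha in R^x\<close>
     \<and> (\<forall>\<alpha>\<in>nonisotropic_roots sc br B h. \<forall>x\<in>root_space sc br h \<alpha>. \<forall>y. \<exists>n. (br x ^^ n) y = 0)
     \<comment> \<open>R is discrete\<close>
     \<and> (\<forall>\<alpha>\<in>roots sc br h. \<exists>\<epsilon>>0. \<exists>F. finite F \<and> F \<subseteq> h \<and>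
           (\<forall>\<beta>\<in>roots sc br h. \<beta> \<noteq> \<alpha> \<longrightarrow> (\<exists>s\<in>F. cmod (\<beta> s - \<alpha> s) \<ge> \<epsilon>)))
     \<comment> \<open>R^x is connected\<close>
     \<and> \<not> (\<exists>R1 R2. R1 \<noteq> {} \<and> R2 \<noteq> {} \<and> R1 \<union> R2 = nonisotropic_roots sc br B h \<and> R1 \<inter> R2 = {}
               \<and> (\<forall>\<alpha>\<in>R1. \<forall>\<beta>\<in>R2. rform B h \<alpha> \<beta> = 0))
     \<comment> \<open>isotropic roots are non-isolated\<close>
     \<and> (\<forall>\<delta>\<in>isotropic_roots sc br B h. \<exists>\<alpha>\<in>nonisotropic_roots sc br B h. (\<lambda>s. \<delta> s + \<alpha> s) \<in> roots sc br h)
     \<comment> \<open>R is reduced\<close>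
     \<and> (\<forall>\<alpha>\<in>nonisotropic_roots sc br B h. (\<lambda>s. 2 * \<alpha> s) \<notin> roots sc br h)"

definition admissible_aut :: "(complex \<Rightarrow> 'g::ab_group_add \<Rightarrow> 'g) \<Rightarrow> ('g \<Rightarrow> 'g \<Rightarrow> 'g) \<Rightarrow> ('g \<Rightarrow> 'g \<Rightarrow> complex) \<Rightarrow> 'g set \<Rightarrow> ('g \<Rightarrow> 'g) \<Rightarrow> nat \<Rightarrow> bool" where
  "admissible_aut sc br B h \<sigma> m \<longleftrightarrow>
     m \<ge> 1
     \<and> bij \<sigma>
     \<and> (\<forall>x y. \<sigma> (x + y) = \<sigma> x + \<sigma> y)
     \<and> (\<forall>c x. \<sigma> (sc c x) = sc c (\<sigma> x))
     \<and> (\<forall>x y. \<sigma> (br x y) = br (\<sigma> x) (\<sigma> y))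
     \<and> (\<sigma> ^^ m) = id
     \<and> \<sigma> ` h = h
     \<and> (\<forall>x y. B (\<sigma> x) (\<sigma> y) = B x y)
     \<and> centralizer br {x. \<sigma> x = x} (h \<inter> {x. \<sigma> x = x}) = h \<inter> {x. \<sigma> x = x}"

definition primitive_root :: "complex \<Rightarrow> nat \<Rightarrow> bool" where
  "primitive_root \<omega> m \<longleftrightarrow> \<omega> ^ m = 1 \<and> (\<forall>k. 0 < k \<and> k < m \<longrightarrow> \<omega> ^ k \<noteq> 1)"

definition pi_g :: "(complex \<Rightarrow> 'g::ab_group_add \<Rightarrow> 'g) \<Rightarrow> ('g \<Rightarrow> 'g) \<Rightarrow> nat \<Rightarrow> complex \<Rightarrow> int \<Rightarrow> 'g \<Rightarrow> 'g" where
  "pi_g sc \<sigma> m \<omega> j x = sc (1 / of_nat m) (\<Sum>i<m. sc (\<omega> powi (- (int i * j))) ((\<sigma> ^^ i) x))"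

definition sigma_dual :: "('g \<Rightarrow> 'g) \<Rightarrow> ('g \<Rightarrow> complex) \<Rightarrow> ('g \<Rightarrow> complex)" where
  "sigma_dual \<sigma> \<alpha> = (\<lambda>s. \<alpha> (inv \<sigma> s))"

definition pi_dual :: "('g \<Rightarrow> 'g) \<Rightarrow> nat \<Rightarrow> complex \<Rightarrow> int \<Rightarrow> ('g \<Rightarrow> complex) \<Rightarrow> ('g \<Rightarrow> complex)" where
  "pi_dual \<sigma> m \<omega> j \<alpha> = (\<lambda>s. (1 / of_nat m) * (\<Sum>i<m. \<omega> powi (- (int i * j)) * ((sigma_dual \<sigma> ^^ i) \<alpha>) s))"

end

(* Put gamma = alpha - beta.  Brackets of g_alpha with g_(-beta) lie in g_gamma, and pi(alpha) = pi(beta)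
   forces gamma to vanish on h^sigma, so g_gamma centralizes h^sigma.  This centralizer is a
   sigma-stable subspace, hence stable under every pi_k.  For z in g_gamma the vector pi z is moreover
   sigma-fixed, so it lies in C_(g^sigma)(h^sigma) = h^sigma, inside h = g_0.  But m * pi z is the sum
   of the sigma^i z, which lie in the root spaces of the nonzero roots sigma^i(gamma); independence of
   root spaces forces this sum to vanish. *)

theory Submission
  imports Defs
begin

lemma hdual_diff: "\<alpha> \<in> hdual sc h \<Longrightarrow> \<beta> \<in> hdual sc h \<Longrightarrow> (\<lambda>s. \<alpha> s - \<beta> s) \<in> hdual sc h"
  by (simp add: hdual_def algebra_simps)

locale eala_structure =
  fixes sc :: "complex \<Rightarrow> 'g::ab_group_add \<Rightarrow> 'g"
    and br :: "'g \<Rightarrow> 'g \<Rightarrow> 'g"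
    and B :: "'g \<Rightarrow> 'g \<Rightarrow> complex"
    and h :: "'g set"
  assumes eala: "eala sc br B h"
begin

lemma lie_algebra: "lie_algebra sc br"
  using eala unfolding eala_def by simp

sublocale vector_space sc
  using lie_algebra unfolding lie_algebra_def by simp

lemma br_add_left: "br (x + y) z = br x z + br y z"
  and br_scale_left: "br (sc c x) y = sc c (br x y)"
  and br_self: "br x x = 0"
  and jacobi: "br x (br y z) + br y (br z x) + br z (br x y) = 0"
  using lie_algebra unfolding lie_algebra_def by simp_all

lemma B_add_left: "B (x + y) z = B x z + B y z"
  and B_scale_left: "B (sc c x) y = c * B x y"
  and B_sym: "B x y = B y x"
  and B_invariant: "B (br x y) z = B x (br y z)"
  using eala unfolding eala_def by (elim conjE, simp)+

lemma B_nondegenerate: "(\<And>y. B x y = 0) \<Longrightarrow> x = 0"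
  using eala unfolding eala_def by (elim conjE) simp

text \<open>The axioms of \<^const>\<open>lie_algebra\<close> only ask for linearity in the first argument;
  linearity in the second one is forced by the invariant nondegenerate form.\<close>

lemma br_add_right: "br x (y + z) = br x y + br x z"
proof (rule B_nondegenerate[of "br x (y + z) - (br x y + br x z)", simplified])
  fix w
  have "B (br x (y + z)) w = B x (br y w) + B x (br z w)"
    by (simp add: B_invariant br_add_left B_sym[of x] B_add_left)
  also have "\<dots> = B (br x y + br x z) w"
    by (simp add: B_invariant B_add_left)
  finally show "B (br x (y + z) - (br x y + br x z)) w = 0"
    using B_add_left[of "br x (y + z) - (br x y + br x z)" "br x y + br x z" w] by simp
qed

lemma br_scale_right: "br x (sc c y) = sc c (br x y)"
proof (rule B_nondegenerate[of "br x (sc c y) - sc c (br x y)", simplified])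
  fix w
  have "B (br x (sc c y)) w = c * B x (br y w)"
    by (simp add: B_invariant br_scale_left B_sym[of x] B_scale_left)
  also have "\<dots> = B (sc c (br x y)) w"
    by (simp add: B_invariant B_scale_left)
  finally show "B (br x (sc c y) - sc c (br x y)) w = 0"
    using B_add_left[of "br x (sc c y) - sc c (br x y)" "sc c (br x y)" w] by simp
qed

lemma br_zero_right: "br x 0 = 0"
  using br_add_right[of x 0 0] by simp

lemma br_anticomm: "br x y = - br y x"
proof -
  have "br x y + br y x = br (x + y) (x + y)"
    using br_self[of x] br_self[of y] by (simp add: br_add_left br_add_right)
  then show ?thesis
    by (simp only: br_self eq_neg_iff_add_eq_0)
qed

lemma br_minus_right: "br x (- y) = - br x y"
  using br_add_right[of x y "- y"] by (simp add: br_zero_right eq_neg_iff_add_eq_0 add.commute)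

lemma root_space_subspace: "subspace (root_space sc br h \<delta>)"
  unfolding subspace_def root_space_def
  by (auto simp: br_add_right br_scale_right br_zero_right scale_right_distrib scale_left_commute)

lemma br_root_space:
  assumes x: "x \<in> root_space sc br h \<alpha>" and y: "y \<in> root_space sc br h \<delta>"
  shows "br x y \<in> root_space sc br h (\<lambda>s. \<alpha> s + \<delta> s)"
  unfolding root_space_def mem_Collect_eq
proof
  fix t assume t: "t \<in> h"
  have tx: "br t x = sc (\<alpha> t) x" and ty: "br t y = sc (\<delta> t) y"
    using x y t unfolding root_space_def by auto
  have "br t (br x y) = - br x (br y t) - br y (br t x)"
    using jacobi[of t x y] by (simp add: algebra_simps eq_neg_iff_add_eq_0)
  also have "\<dots> = sc (\<alpha> t) (br x y) + sc (\<delta> t) (br x y)"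
    using br_anticomm[of y t] br_anticomm[of y x]
    by (simp add: tx ty br_scale_right br_minus_right)
  finally show "br t (br x y) = sc (\<alpha> t + \<delta> t) (br x y)"
    by (simp add: scale_left_distrib)
qed

lemma brsp_root_space:
  "brsp sc br (root_space sc br h \<alpha>) (root_space sc br h \<delta>)
     \<subseteq> root_space sc br h (\<lambda>s. \<alpha> s + \<delta> s)"
  unfolding brsp_def lspan_def
  by (rule span_minimal) (auto intro: br_root_space root_space_subspace)

lemma centralizer_subspace: "subspace (centralizer br UNIV S)"
  unfolding subspace_def centralizer_def
  by (simp add: br_add_right br_scale_right br_zero_right)

lemma root_space_centralizer:
  assumes "x \<in> root_space sc br h \<gamma>" and "S \<subseteq> h" and "\<And>s. s \<in> S \<Longrightarrow> \<gamma> s = 0"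
  shows "x \<in> centralizer br UNIV S"
  using assms unfolding root_space_def centralizer_def by auto

lemma h_subspace: "subspace h"
  and h_eq_root_space_0: "root_space sc br h (\<lambda>_. 0) = h"
  using eala unfolding eala_def by (elim conjE, simp)+

lemma root_spaces_independent:
  assumes "finite D" "D \<subseteq> hdual sc h" "\<And>\<delta>. \<delta> \<in> D \<Longrightarrow> f \<delta> \<in> root_space sc br h \<delta>"
    and "sum f D = 0" "\<delta> \<in> D"
  shows "f \<delta> = 0"
proof -
  have "\<forall>S f. finite S \<and> S \<subseteq> hdual sc h \<and> (\<forall>\<alpha>\<in>S. f \<alpha> \<in> root_space sc br h \<alpha>)
      \<and> sum f S = 0 \<longrightarrow> (\<forall>\<alpha>\<in>S. f \<alpha> = 0)"
    using eala unfolding eala_def by (elim conjE) assumption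
  then show ?thesis
    using assms by blast
qed

lemma sum_root_vectors_in_h_eq_0:
  assumes I: "finite I"
    and d: "\<And>i. i \<in> I \<Longrightarrow> d i \<in> hdual sc h" "\<And>i. i \<in> I \<Longrightarrow> d i \<noteq> (\<lambda>_. 0)"
    and x: "\<And>i. i \<in> I \<Longrightarrow> x i \<in> root_space sc br h (d i)"
    and sum_in_h: "sum x I \<in> h"
  shows "sum x I = 0"
proof -
  \<comment> \<open>the roots \<open>d i\<close> need not be distinct, so the vectors are first grouped by root\<close>
  define F where "F \<delta> = (\<Sum>i\<in>{i\<in>I. d i = \<delta>}. x i)" for \<delta>
  define f where "f = F((\<lambda>_. 0) := - sum x I)"
  have zero_notin: "(\<lambda>_. 0) \<notin> d ` I"
    using d(2) by (metis imageE)
  have "sum f (d ` I) = sum F (d ` I)"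
    unfolding f_def by (intro sum.cong refl) (metis zero_notin fun_upd_other)
  also have "\<dots> = sum x I"
    unfolding F_def using I by (rule sum.image_gen[symmetric])
  finally have sum_f: "sum f (d ` I) = sum x I" .
  have "sum f (insert (\<lambda>_. 0) (d ` I)) = f (\<lambda>_. 0) + sum f (d ` I)"
    using I zero_notin by simp
  also have "\<dots> = 0"
    unfolding sum_f by (simp add: f_def)
  finally have "sum f (insert (\<lambda>_. 0) (d ` I)) = 0" .
  moreover have "f \<delta> \<in> root_space sc br h \<delta>" if "\<delta> \<in> insert (\<lambda>_. 0) (d ` I)" for \<delta>
  proof (cases "\<delta> = (\<lambda>_. 0)")
    case True
    then show ?thesis
      using sum_in_h by (simp add: f_def h_eq_root_space_0 subspace_neg[OF h_subspace])
  next
    case False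
    then show ?thesis
      unfolding f_def F_def using x
      by (auto intro: subspace_sum[OF root_space_subspace])
  qed
  moreover have "insert (\<lambda>_. 0) (d ` I) \<subseteq> hdual sc h"
    using d(1) by (auto simp: hdual_def)
  ultimately have "f (\<lambda>_. 0) = 0"
    using I by (intro root_spaces_independent) auto
  then show ?thesis
    by (simp add: f_def)
qed

end

locale eala_automorphism = eala_structure +
  fixes \<sigma> and m :: nat
  assumes admissible: "admissible_aut sc br B h \<sigma> m"
begin

abbreviation h_sigma where
  "h_sigma \<equiv> h \<inter> {x. \<sigma> x = x}"

lemma m_pos: "m \<ge> 1"
  and sigma_bij: "bij \<sigma>"
  and sigma_add: "\<sigma> (x + y) = \<sigma> x + \<sigma> y"
  and sigma_scale: "\<sigma> (sc c x) = sc c (\<sigma> x)"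
  and sigma_br: "\<sigma> (br x y) = br (\<sigma> x) (\<sigma> y)"
  and sigma_funpow_m: "\<sigma> ^^ m = id"
  and sigma_image_h: "\<sigma> ` h = h"
  and fixed_centralizer_h_sigma: "centralizer br {x. \<sigma> x = x} h_sigma = h_sigma"
  using admissible unfolding admissible_aut_def by (elim conjE, simp)+

sublocale sigma: additive \<sigma>
  by unfold_locales (rule sigma_add)

lemma sigma_inv_sigma: "\<sigma> (inv \<sigma> y) = y"
  and inv_sigma_sigma: "inv \<sigma> (\<sigma> x) = x"
  using sigma_bij by (simp_all add: bij_is_inj bij_is_surj surj_f_inv_f)

lemma sigma_inj: "inj \<sigma>"
  using sigma_bij by (rule bij_is_inj)

lemma inv_sigma_in_h_iff: "inv \<sigma> t \<in> h \<longleftrightarrow> t \<in> h"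
proof -
  have "inv \<sigma> t \<in> h \<longleftrightarrow> \<sigma> (inv \<sigma> t) \<in> \<sigma> ` h"
    using sigma_inj by (simp add: inj_image_mem_iff)
  then show ?thesis
    by (simp add: sigma_inv_sigma sigma_image_h)
qed

lemma inv_sigma_add: "inv \<sigma> (x + y) = inv \<sigma> x + inv \<sigma> y"
  and inv_sigma_scale: "inv \<sigma> (sc c x) = sc c (inv \<sigma> x)"
  by (rule injD[OF sigma_inj], simp add: sigma_add sigma_scale sigma_inv_sigma)+

lemma sigma_dual_hdual: "\<delta> \<in> hdual sc h \<Longrightarrow> sigma_dual \<sigma> \<delta> \<in> hdual sc h"
  unfolding hdual_def sigma_dual_def
  by (simp add: inv_sigma_in_h_iff inv_sigma_add inv_sigma_scale)

lemma funpow_sigma_dual_hdual: "\<delta> \<in> hdual sc h \<Longrightarrow> (sigma_dual \<sigma> ^^ i) \<delta> \<in> hdual sc h"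
  by (induction i) (simp_all add: sigma_dual_hdual)

lemma sigma_dual_eq_0_iff: "sigma_dual \<sigma> \<delta> = (\<lambda>_. 0) \<longleftrightarrow> \<delta> = (\<lambda>_. 0)"
  unfolding sigma_dual_def fun_eq_iff by (metis inv_sigma_sigma)

lemma funpow_sigma_dual_nonzero: "\<delta> \<noteq> (\<lambda>_. 0) \<Longrightarrow> (sigma_dual \<sigma> ^^ i) \<delta> \<noteq> (\<lambda>_. 0)"
  by (induction i) (simp_all add: sigma_dual_eq_0_iff)

lemma funpow_sigma_dual_at_fixed_point:
  assumes "\<sigma> t = t"
  shows "(sigma_dual \<sigma> ^^ i) \<delta> t = \<delta> t"
proof -
  have "inv \<sigma> t = t"
    using inv_sigma_sigma[of t] assms by simp
  then show ?thesis
    by (induction i) (simp_all add: sigma_dual_def)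
qed

lemma pi_dual_0_at_fixed_point: "\<sigma> t = t \<Longrightarrow> pi_dual \<sigma> m \<omega> 0 \<delta> t = \<delta> t"
  using m_pos by (simp add: pi_dual_def funpow_sigma_dual_at_fixed_point)

lemma eq_on_h_sigma_if_pi_dual_0_eq:
  assumes "pi_dual \<sigma> m \<omega> 0 \<alpha> = pi_dual \<sigma> m \<omega> 0 \<beta>" and s: "s \<in> h_sigma"
  shows "\<alpha> s = \<beta> s"
proof -
  have "pi_dual \<sigma> m \<omega> 0 \<alpha> s = pi_dual \<sigma> m \<omega> 0 \<beta> s"
    using assms(1) by simp
  then show ?thesis
    using s by (simp add: pi_dual_0_at_fixed_point)
qed

lemma sigma_root_space:
  assumes x: "x \<in> root_space sc br h \<delta>"
  shows "\<sigma> x \<in> root_space sc br h (sigma_dual \<sigma> \<delta>)"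
  unfolding root_space_def mem_Collect_eq sigma_dual_def
proof
  fix t assume "t \<in> h"
  then have "br (inv \<sigma> t) x = sc (\<delta> (inv \<sigma> t)) x"
    using x inv_sigma_in_h_iff unfolding root_space_def by blast
  then have "\<sigma> (br (inv \<sigma> t) x) = \<sigma> (sc (\<delta> (inv \<sigma> t)) x)"
    by simp
  then show "br t (\<sigma> x) = sc (\<delta> (inv \<sigma> t)) (\<sigma> x)"
    by (simp add: sigma_br sigma_scale sigma_inv_sigma)
qed

lemma funpow_sigma_root_space:
  "x \<in> root_space sc br h \<delta> \<Longrightarrow> (\<sigma> ^^ i) x \<in> root_space sc br h ((sigma_dual \<sigma> ^^ i) \<delta>)"
  by (induction i) (simp_all add: sigma_root_space)

lemma pi_g_in_sigma_stable_subspace: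
  assumes V: "subspace V" and stable: "\<And>x. x \<in> V \<Longrightarrow> \<sigma> x \<in> V" and x: "x \<in> V"
  shows "pi_g sc \<sigma> m \<omega> k x \<in> V"
proof -
  have "(\<sigma> ^^ i) x \<in> V" for i
    by (induction i) (simp_all add: x stable)
  then show ?thesis
    unfolding pi_g_def by (intro subspace_scale[OF V] subspace_sum[OF V]) simp
qed

lemma sigma_pi_g_0: "\<sigma> (pi_g sc \<sigma> m \<omega> 0 x) = pi_g sc \<sigma> m \<omega> 0 x"
proof -
  have "\<sigma> (\<Sum>i<m. (\<sigma> ^^ i) x) = (\<Sum>i<m. (\<sigma> ^^ Suc i) x)"
    by (simp add: sigma.sum)
  also have "\<dots> = (\<Sum>i<m. (\<sigma> ^^ i) x)"
    using sum.lessThan_Suc_shift[of "\<lambda>i. (\<sigma> ^^ i) x" m] sum.lessThan_Suc[of "\<lambda>i. (\<sigma> ^^ i) x" m]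
    by (simp add: sigma_funpow_m add.commute)
  finally show ?thesis
    by (simp add: pi_g_def sigma_scale)
qed

lemma sigma_centralizer_h_sigma:
  assumes x: "x \<in> centralizer br UNIV h_sigma"
  shows "\<sigma> x \<in> centralizer br UNIV h_sigma"
  unfolding centralizer_def
proof (intro CollectI conjI UNIV_I ballI)
  fix s assume s: "s \<in> h_sigma"
  then have "br s (\<sigma> x) = \<sigma> (br s x)"
    by (simp add: sigma_br)
  also have "\<dots> = 0"
    using x s by (simp add: centralizer_def sigma.zero)
  finally show "br s (\<sigma> x) = 0" .
qed

lemma pi_g_root_vector_centralizer:
  assumes "x \<in> root_space sc br h \<gamma>" and "\<And>s. s \<in> h_sigma \<Longrightarrow> \<gamma> s = 0"
  shows "pi_g sc \<sigma> m \<omega> k x \<in> centralizer br UNIV h_sigma"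
  using centralizer_subspace sigma_centralizer_h_sigma
  by (rule pi_g_in_sigma_stable_subspace) (use assms in \<open>auto intro: root_space_centralizer\<close>)

lemma pi_g_0_root_vector_eq_0:
  assumes x: "x \<in> root_space sc br h \<gamma>"
    and \<gamma>: "\<gamma> \<in> hdual sc h" "\<gamma> \<noteq> (\<lambda>_. 0)"
    and vanish: "\<And>s. s \<in> h_sigma \<Longrightarrow> \<gamma> s = 0"
  shows "pi_g sc \<sigma> m \<omega> 0 x = 0"
proof -
  define w where "w = pi_g sc \<sigma> m \<omega> 0 x"
  have w_eq: "w = sc (1 / of_nat m) (\<Sum>i<m. (\<sigma> ^^ i) x)"
    by (simp add: w_def pi_g_def)
  have "w \<in> centralizer br {x. \<sigma> x = x} h_sigma"
    using pi_g_root_vector_centralizer[OF x vanish] sigma_pi_g_0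
    unfolding w_def centralizer_def by auto
  then have "w \<in> h"
    using fixed_centralizer_h_sigma by blast
  moreover have "(\<Sum>i<m. (\<sigma> ^^ i) x) = sc (of_nat m) w"
    using m_pos by (simp add: w_eq)
  ultimately have "(\<Sum>i<m. (\<sigma> ^^ i) x) \<in> h"
    using h_subspace by (simp add: subspace_scale)
  then have "(\<Sum>i<m. (\<sigma> ^^ i) x) = 0"
    using \<gamma> by (intro sum_root_vectors_in_h_eq_0[where d = "\<lambda>i. (sigma_dual \<sigma> ^^ i) \<gamma>"])
      (simp_all add: funpow_sigma_dual_hdual funpow_sigma_dual_nonzero funpow_sigma_root_space x)
  then show ?thesis
    by (simp add: w_def[symmetric] w_eq)
qed

end

theorem lemma5p3:
  fixes sc :: "complex \<Rightarrow> 'g::ab_group_add \<Rightarrow> 'g"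
    and br :: "'g \<Rightarrow> 'g \<Rightarrow> 'g"
    and B :: "'g \<Rightarrow> 'g \<Rightarrow> complex"
    and h :: "'g set"
    and \<sigma> :: "'g \<Rightarrow> 'g"
    and m :: nat
    and \<omega> :: complex
    and \<alpha> \<beta> :: "'g \<Rightarrow> complex"
  assumes "eala sc br B h"
    and "admissible_aut sc br B h \<sigma> m"
    and "primitive_root \<omega> m"
    and "\<alpha> \<in> roots sc br h" and "\<beta> \<in> roots sc br h" and "\<alpha> \<noteq> \<beta>"
    and "pi_dual \<sigma> m \<omega> 0 \<alpha> = pi_dual \<sigma> m \<omega> 0 \<beta>"
  shows "(\<forall>k::int. pi_g sc \<sigma> m \<omega> k ` brsp sc br (root_space sc br h \<alpha>) (root_space sc br h (\<lambda>s. - \<beta> s))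
            \<subseteq> centralizer br UNIV (h \<inter> {x. \<sigma> x = x}))
       \<and> pi_g sc \<sigma> m \<omega> 0 ` brsp sc br (root_space sc br h \<alpha>) (root_space sc br h (\<lambda>s. - \<beta> s)) = {0}"
proof -
  interpret eala_automorphism sc br B h \<sigma> m
    using assms(1,2) by unfold_locales
  let ?S = "brsp sc br (root_space sc br h \<alpha>) (root_space sc br h (\<lambda>s. - \<beta> s))"
  define \<gamma> where "\<gamma> = (\<lambda>s. \<alpha> s - \<beta> s)"
  have S_root_space: "?S \<subseteq> root_space sc br h \<gamma>"
    using brsp_root_space[of \<alpha> "\<lambda>s. - \<beta> s"] by (simp add: \<gamma>_def)
  have \<gamma>_hdual: "\<gamma> \<in> hdual sc h"
    using assms(4,5) unfolding \<gamma>_def roots_def by (simp add: hdual_diff)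
  have \<gamma>_nonzero: "\<gamma> \<noteq> (\<lambda>_. 0)"
    using assms(6) by (auto simp: \<gamma>_def fun_eq_iff)
  have \<gamma>_vanishes: "\<gamma> s = 0" if "s \<in> h_sigma" for s
    using eq_on_h_sigma_if_pi_dual_0_eq[OF assms(7) that] by (simp add: \<gamma>_def)
  have "pi_g sc \<sigma> m \<omega> k z \<in> centralizer br UNIV h_sigma" if "z \<in> ?S" for k z
    using subsetD[OF S_root_space that] \<gamma>_vanishes by (rule pi_g_root_vector_centralizer)
  moreover have "pi_g sc \<sigma> m \<omega> 0 z = 0" if "z \<in> ?S" for z
    using subsetD[OF S_root_space that] \<gamma>_hdual \<gamma>_nonzero \<gamma>_vanishes
    by (rule pi_g_0_root_vector_eq_0)
  moreover have "0 \<in> ?S"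
    by (simp add: brsp_def lspan_def span_zero)
  ultimately show ?thesis
    by auto
qed

end
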